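(* Let $A, B \in\mathbb{C}^{n\times n}$ be matrices of index at most $1$. Then $A\leq^{1GD}B$ if and only if $A\,\#\!\leq B$, where $A\,\#\!\leq B$ (left sharp partial order) means $A^2=AB$ and $R(A)\subseteq R(B)$.
   Context: For $A\in\mathbb{C}^{n\times n}$, $ind(A)$ is the smallest nonnegative integer $k$ with $\mathrm{rank}(A^k)=\mathrm{rank}(A^{k+1})$. $A\{1\}$ is the set of matrices $X$ with $AXA=A$. With $k=ind(A)$, $A\{GD\}$ is the set of matrices $X$ with $AXA=A$, $XA^{k+1}=A^k$, $A^{k+1}X=A^k$ (G-Drazin inverses). A 1GD inverse of $A$ is a matrix $A^{1GD}=A^{-}AA^{GD}$ with $A^-\in A\{1\}$, $A^{GD}\in A\{GD\}$. We write $A\leq^{1GD}B$ if $AA^{1GD}=BA^{1GD}$ and $A^{1GD}A=A^{1GD}B$ for some 1GD inverse $A^{1GD}$ of $A$. $R(\cdot)$ denotes range. *)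

theory Defs
  imports "HOL-Analysis.Analysis"
begin

fun matpow :: "'a::comm_ring_1^'n^'n \<Rightarrow> nat \<Rightarrow> 'a^'n^'n" where
  "matpow A 0 = mat 1"
| "matpow A (Suc k) = A ** matpow A k"

definition ind :: "complex^'n^'n \<Rightarrow> nat" where
  "ind A = (LEAST k. rank (matpow A k) = rank (matpow A (Suc k)))"

definition mat_range :: "complex^'n^'m \<Rightarrow> (complex^'m) set" where
  "mat_range A = range (\<lambda>x. A *v x)"

definition inner_inv1 :: "complex^'n^'n \<Rightarrow> complex^'n^'n \<Rightarrow> bool" where
  "inner_inv1 A X \<longleftrightarrow> A ** X ** A = A"

definition GD_inv :: "complex^'n^'n \<Rightarrow> complex^'n^'n \<Rightarrow> bool" where
  "GD_inv A X \<longleftrightarrow> A ** X ** A = A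
     \<and> X ** matpow A (ind A + 1) = matpow A (ind A)
     \<and> matpow A (ind A + 1) ** X = matpow A (ind A)"

definition oneGD_inv :: "complex^'n^'n \<Rightarrow> complex^'n^'n \<Rightarrow> bool" where
  "oneGD_inv A Y \<longleftrightarrow> (\<exists>X G. inner_inv1 A X \<and> GD_inv A G \<and> Y = X ** A ** G)"

definition leq_1GD :: "complex^'n^'n \<Rightarrow> complex^'n^'n \<Rightarrow> bool" where
  "leq_1GD A B \<longleftrightarrow> (\<exists>Y. oneGD_inv A Y \<and> A ** Y = B ** Y \<and> Y ** A = Y ** B)"

definition left_sharp_leq :: "complex^'n^'n \<Rightarrow> complex^'n^'n \<Rightarrow> bool" where
  "left_sharp_leq A B \<longleftrightarrow> A ** A = A ** B \<and> mat_range A \<subseteq> mat_range B"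

end

theory Submission
  imports Defs
begin

text \<open>
  Index at most one means rank (A^2) = rank A. This gives V with V A^2 = A, so A is injective on
  its range and hence R(A^2) = R(A), i.e. A^2 U = A for some U; then V A U is the group inverse
  A^#, which is also a G-Drazin inverse, and every G-Drazin inverse G satisfies A^2 G = A.

  If A \<le>1GD B is witnessed by Y = X A G, expanding A = A X A G A once on each side gives
  A = B X A and A = A G B; hence R(A) \<subseteq> R(B) and A^2 = A^2 G B = A B. Conversely, if
  A^2 = A B and A = B W, then A W = A and A^# B = A^# A, and Y = W A^# is a 1GD inverse
  (take X = W A^#) with A Y = B Y and Y A = Y B.
\<close>

lemma matrix_vector_mult_axis:
  fixes A :: "'a::comm_semiring_1^'n^'m"
  shows "A *v axis j 1 = column j A"
  by (simp add: vec_eq_iff matrix_vector_mult_def column_def axis_def if_distrib if_distribR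
      cong: if_cong)

lemma column_matrix_mult:
  fixes A :: "'a::comm_semiring_1^'n^'m"
  shows "column j (A ** B) = A *v column j B"
  by (simp add: vec_eq_iff matrix_matrix_mult_def matrix_vector_mult_def column_def)

lemma range_matrix_vector_mult_eq_span_columns:
  fixes A :: "'a::field^'n^'m"
  shows "range (\<lambda>x. A *v x) = vec.span (columns A)"
proof
  show "range (\<lambda>x. A *v x) \<subseteq> vec.span (columns A)"
    using matrix_vector_mult_in_columnspace_gen by blast
  have "columns A \<subseteq> range (\<lambda>x. A *v x)"
    by (auto simp: columns_def simp flip: matrix_vector_mult_axis)
  moreover have "vec.subspace (range (\<lambda>x. A *v x))"
    by (rule vec.linear_subspace_image[OF matrix_vector_mul_linear_gen vec.subspace_UNIV])
  ultimately show "vec.span (columns A) \<subseteq> range (\<lambda>x. A *v x)"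
    by (rule vec.span_minimal)
qed

lemma range_subset_imp_right_factor:
  fixes A :: "'a::comm_semiring_1^'n^'m" and B :: "'a^'p^'m"
  assumes "range (\<lambda>x. A *v x) \<subseteq> range (\<lambda>x. B *v x)"
  shows "\<exists>W. B ** W = A"
proof -
  have "\<forall>j. \<exists>x. B *v x = column j A"
    using assms by (metis matrix_vector_mult_axis rangeE rangeI subsetD)
  then obtain f where f: "B *v f j = column j A" for j
    by metis
  define W where "W = (\<chi> k j. f j $ k)"
  have "column j W = f j" for j
    by (simp add: W_def column_def vec_eq_iff)
  then have "column j (B ** W) = column j A" for j
    by (simp add: column_matrix_mult f)
  then have "(B ** W) $ i $ j = A $ i $ j" for i j
    by (metis (no_types) column_def vec_lambda_beta)
  then show ?thesis
    by (auto simp: vec_eq_iff)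
qed

lemma range_matrix_mult_subset:
  fixes A :: "'a::comm_semiring_1^'n^'m"
  shows "range (\<lambda>x. (A ** B) *v x) \<subseteq> range (\<lambda>x. A *v x)"
  by (auto simp flip: matrix_vector_mul_assoc)

lemma rows_matrix_mult_subset_span:
  fixes M :: "'a::field^'n^'m" and N :: "'a^'p^'n"
  shows "rows (M ** N) \<subseteq> vec.span (rows N)"
proof -
  have "rows (M ** N) = columns (transpose N ** transpose M)"
    by (metis columns_transpose matrix_transpose_mul)
  also have "\<dots> \<subseteq> range (\<lambda>x. (transpose N ** transpose M) *v x)"
    unfolding range_matrix_vector_mult_eq_span_columns by (rule vec.span_superset)
  also have "\<dots> \<subseteq> range (\<lambda>x. transpose N *v x)"
    by (rule range_matrix_mult_subset)
  finally show ?thesis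
    by (simp only: range_matrix_vector_mult_eq_span_columns columns_transpose)
qed

lemma rank_mul_le_right_gen:
  fixes M :: "'a::field^'n^'m" and N :: "'a^'p^'n"
  shows "rank (M ** N) \<le> rank N"
  unfolding row_rank_def_gen by (rule vec.dim_mono[OF rows_matrix_mult_subset_span])

lemma rank_mul_eq_imp_left_factor:
  fixes M :: "'a::field^'n^'m" and N :: "'a^'p^'n"
  assumes "rank (M ** N) = rank N"
  shows "\<exists>V. V ** (M ** N) = N"
proof -
  have "vec.span (rows (M ** N)) = vec.span (vec.span (rows N))"
    using assms vec.dim_eq_span[OF rows_matrix_mult_subset_span[of M N]]
    by (simp add: row_rank_def_gen)
  then have "range (\<lambda>x. transpose N *v x) \<subseteq> range (\<lambda>x. transpose (M ** N) *v x)"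
    unfolding range_matrix_vector_mult_eq_span_columns columns_transpose by (simp add: vec.span_span)
  then obtain W where "transpose (M ** N) ** W = transpose N"
    using range_subset_imp_right_factor by blast
  then have "transpose W ** (M ** N) = N"
    by (metis matrix_transpose_mul transpose_transpose)
  then show ?thesis ..
qed

lemma antimono_nat_ex_Suc_eq:
  fixes f :: "nat \<Rightarrow> nat"
  assumes "antimono f"
  shows "\<exists>k. f (Suc k) = f k"
proof (rule ccontr)
  assume "\<not> ?thesis"
  then have decrease: "f (Suc k) < f k" for k
    using assms by (simp add: antimono_iff_le_Suc order_less_le)
  have "f k + k \<le> f 0" for k
  proof (induction k)
    case (Suc k)
    then show ?case using decrease[of k] by linarith
  qed simp
  from this[of "Suc (f 0)"] show False by simp
qed

lemma rank_matpow_ind: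
  "rank (matpow A (Suc (ind A))) = rank (matpow A (ind A))"
proof -
  have "antimono (\<lambda>k. rank (matpow A k))"
    by (simp add: antimono_iff_le_Suc rank_mul_le_right_gen)
  then show ?thesis
    unfolding ind_def by (metis (mono_tags, lifting) LeastI_ex antimono_nat_ex_Suc_eq)
qed

lemma ind_eq_0_imp_invertible:
  fixes A :: "complex^'n^'n"
  assumes "ind A = 0"
  shows "invertible A"
proof -
  have "rank (A ** mat 1) = rank (mat 1 :: complex^'n^'n)"
    using rank_matpow_ind[of A] assms by simp
  then obtain V where "V ** (A ** mat 1) = mat 1"
    using rank_mul_eq_imp_left_factor by blast
  then show ?thesis
    using invertible_left_inverse by auto
qed

lemma range_subset_range_square:
  fixes A :: "'a::field^'n^'n"
  assumes "V ** (A ** A) = A"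
  shows "range (\<lambda>x. A *v x) \<subseteq> range (\<lambda>x. (A ** A) *v x)"
proof -
  let ?R = "range (\<lambda>x. A *v x)" and ?R2 = "range (\<lambda>x. (A ** A) *v x)"
  have subspace: "vec.subspace (range (\<lambda>x. M *v x))" for M :: "'a^'n^'n"
    by (simp add: range_matrix_vector_mult_eq_span_columns)
  have "inj_on (\<lambda>x. A *v x) ?R"
  proof (rule inj_onI)
    fix x y
    assume "x \<in> ?R" "y \<in> ?R" and eq: "A *v x = A *v y"
    then obtain u w where x: "x = A *v u" and y: "y = A *v w"
      by blast
    have "V *v ((A ** A) *v u) = V *v ((A ** A) *v w)"
      using eq by (simp add: x y matrix_vector_mul_assoc)
    then show "x = y"
      using assms by (simp add: x y matrix_vector_mul_assoc)
  qed
  then have "vec.dim ((\<lambda>x. A *v x) ` ?R) = vec.dim ?R"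
    using subspace vec.dim_image_eq[OF matrix_vector_mul_linear_gen] by (metis vec.span_eq_iff)
  moreover have "(\<lambda>x. A *v x) ` ?R = ?R2"
    by (auto simp: image_image matrix_vector_mul_assoc)
  ultimately have "?R2 = ?R"
    using vec.subspace_dim_equal[OF subspace subspace range_matrix_mult_subset] by simp
  then show ?thesis
    by simp
qed

definition group_inverse :: "'a::comm_semiring_1^'n^'n \<Rightarrow> 'a^'n^'n \<Rightarrow> bool" where
  "group_inverse A G \<longleftrightarrow> A ** G ** A = A \<and> G ** A ** G = G \<and> A ** G = G ** A"

lemma group_inverse_of_square_factors:
  fixes A :: "'a::comm_semiring_1^'n^'n"
  assumes V: "V ** (A ** A) = A" and U: "(A ** A) ** U = A"
  shows "group_inverse A (V ** A ** U)"
proof -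
  let ?G = "V ** A ** U"
  have AU: "A ** U = V ** A"
  proof -
    have "A ** U = V ** ((A ** A) ** U)"
      using V by (simp add: matrix_mul_assoc)
    then show ?thesis
      using U by simp
  qed
  have AG: "A ** ?G = A ** U"
  proof -
    have "A ** ?G = A ** (V ** A) ** U"
      by (simp add: matrix_mul_assoc)
    also have "\<dots> = (A ** A ** U) ** U"
      using AU[symmetric] by (simp add: matrix_mul_assoc)
    finally show ?thesis
      using U by simp
  qed
  have GA: "?G ** A = A ** U"
  proof -
    have "?G ** A = V ** (A ** U) ** A"
      by (simp add: matrix_mul_assoc)
    also have "\<dots> = V ** (V ** (A ** A))"
      using AU by (simp add: matrix_mul_assoc)
    finally show ?thesis
      using V AU by simp
  qed
  have AGA: "A ** ?G ** A = A"
  proof -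
    have "A ** ?G ** A = V ** (A ** A)"
      using AG AU by (simp add: matrix_mul_assoc)
    then show ?thesis
      using V by simp
  qed
  have GAG: "?G ** A ** ?G = ?G"
  proof -
    have "?G ** A ** ?G = ?G ** (A ** ?G)"
      by (simp add: matrix_mul_assoc)
    also have "\<dots> = ?G ** A ** U"
      using AG by (simp add: matrix_mul_assoc)
    finally show ?thesis
      using GA AU by simp
  qed
  show ?thesis
    unfolding group_inverse_def using AGA GAG AG GA by simp
qed

lemma group_inverse_square_cancel:
  fixes A :: "'a::comm_semiring_1^'n^'n"
  assumes "group_inverse A G"
  shows "G ** (A ** A) = A" and "A ** A ** G = A"
proof -
  have AGA: "A ** G ** A = A" and comm: "A ** G = G ** A"
    using assms unfolding group_inverse_def by blast+
  have "G ** (A ** A) = A ** G ** A"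
    using comm by (simp add: matrix_mul_assoc)
  then show "G ** (A ** A) = A"
    using AGA by simp
  have "A ** A ** G = A ** (G ** A)"
    using comm by (simp flip: matrix_mul_assoc)
  then show "A ** A ** G = A"
    using AGA by (simp add: matrix_mul_assoc)
qed

lemma rank_square_imp_group_inverse:
  fixes A :: "'a::field^'n^'n"
  assumes "rank (A ** A) = rank A"
  obtains G where "group_inverse A G"
proof -
  obtain V where V: "V ** (A ** A) = A"
    using rank_mul_eq_imp_left_factor[OF assms] by blast
  obtain U where "(A ** A) ** U = A"
    using range_subset_imp_right_factor[OF range_subset_range_square[OF V]] by blast
  with V show ?thesis
    using group_inverse_of_square_factors that by blast
qed

lemma ind_le_1_imp_GD_group_inverse:
  fixes A :: "complex^'n^'n"
  assumes "ind A \<le> 1"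
  obtains G where "GD_inv A G" and "group_inverse A G"
proof (cases "ind A = 0")
  case True
  then obtain G where "A ** G = mat 1" and "G ** A = mat 1"
    using ind_eq_0_imp_invertible invertible_def by blast
  then have "GD_inv A G" and "group_inverse A G"
    unfolding GD_inv_def group_inverse_def using True by simp_all
  then show ?thesis
    using that by blast
next
  case False
  with assms have ind: "ind A = 1"
    by simp
  then have "rank (A ** A) = rank A"
    using rank_matpow_ind[of A] by simp
  then obtain G where G: "group_inverse A G"
    by (rule rank_square_imp_group_inverse)
  moreover have "A ** G ** A = A"
    using G unfolding group_inverse_def by blast
  ultimately have "GD_inv A G"
    unfolding GD_inv_def using ind group_inverse_square_cancel[OF G]
    by (simp add: numeral_2_eq_2)
  with G show ?thesis
    using that by blast
qed

lemma GD_inv_square_cancel: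
  fixes A :: "complex^'n^'n"
  assumes "ind A \<le> 1" and "GD_inv A G"
  shows "A ** A ** G = A"
proof (cases "ind A = 0")
  case True
  then show ?thesis
    using assms(2) by (simp add: GD_inv_def flip: matrix_mul_assoc)
next
  case False
  with assms have "ind A = 1"
    by simp
  with assms(2) show ?thesis
    by (simp add: GD_inv_def numeral_2_eq_2)
qed

lemma leq_1GD_imp_left_sharp_leq:
  fixes A B :: "complex^'n^'n"
  assumes "ind A \<le> 1" and "leq_1GD A B"
  shows "left_sharp_leq A B"
proof -
  obtain X G where X: "A ** X ** A = A" and G: "GD_inv A G"
    and left: "A ** (X ** A ** G) = B ** (X ** A ** G)"
    and right: "X ** A ** G ** A = X ** A ** G ** B"
    using assms(2) unfolding leq_1GD_def oneGD_inv_def inner_inv1_def by blast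
  have AGA: "A ** G ** A = A"
    using G by (simp add: GD_inv_def)
  have "B ** (X ** A) = B ** X ** (A ** G ** A)"
    using AGA by (simp add: matrix_mul_assoc)
  also have "\<dots> = B ** (X ** A ** G) ** A"
    by (simp add: matrix_mul_assoc)
  also have "\<dots> = A ** (X ** A ** G) ** A"
    using left by simp
  also have "\<dots> = (A ** X ** A) ** G ** A"
    by (simp add: matrix_mul_assoc)
  finally have BXA: "B ** (X ** A) = A"
    using X AGA by simp
  have "A ** G ** B = (A ** X ** A) ** G ** B"
    using X by simp
  also have "\<dots> = A ** (X ** A ** G ** B)"
    by (simp add: matrix_mul_assoc)
  also have "\<dots> = A ** (X ** A ** G ** A)"
    using right by simp
  also have "\<dots> = (A ** X ** A) ** G ** A"
    by (simp add: matrix_mul_assoc)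
  finally have AGB: "A ** G ** B = A"
    using X AGA by simp
  have "A ** A = A ** (A ** G ** B)"
    using AGB by simp
  also have "\<dots> = (A ** A ** G) ** B"
    by (simp add: matrix_mul_assoc)
  finally have "A ** A = A ** B"
    using GD_inv_square_cancel[OF assms(1) G] by simp
  moreover have "mat_range A \<subseteq> mat_range B"
    using range_matrix_mult_subset[of B "X ** A"] BXA unfolding mat_range_def by simp
  ultimately show ?thesis
    unfolding left_sharp_leq_def ..
qed

lemma left_sharp_leq_imp_leq_1GD:
  fixes A B :: "complex^'n^'n"
  assumes "ind A \<le> 1" and "left_sharp_leq A B"
  shows "leq_1GD A B"
proof -
  have AB: "A ** A = A ** B" and "mat_range A \<subseteq> mat_range B"
    using assms(2) by (auto simp: left_sharp_leq_def)
  then obtain W where BW: "B ** W = A"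
    unfolding mat_range_def using range_subset_imp_right_factor by blast
  obtain G where GD: "GD_inv A G" and G: "group_inverse A G"
    using ind_le_1_imp_GD_group_inverse[OF assms(1)] by blast
  then have AGA: "A ** G ** A = A" and GAG: "G ** A ** G = G" and comm: "A ** G = G ** A"
    unfolding group_inverse_def by blast+
  have AW: "A ** W = A"
  proof -
    have "A ** W = G ** (A ** A) ** W"
      using group_inverse_square_cancel(1)[OF G] by simp
    also have "\<dots> = G ** (A ** (B ** W))"
      using AB by (simp add: matrix_mul_assoc)
    finally show ?thesis
      using BW group_inverse_square_cancel(1)[OF G] by simp
  qed
  have GB: "G ** B = G ** A"
  proof -
    have "G ** B = G ** (A ** G) ** B"
      using GAG by (simp add: matrix_mul_assoc)
    also have "\<dots> = G ** G ** (A ** B)"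
      using comm by (simp add: matrix_mul_assoc)
    also have "\<dots> = G ** (G ** (A ** A))"
      using AB by (simp add: matrix_mul_assoc)
    finally show ?thesis
      using group_inverse_square_cancel(1)[OF G] by simp
  qed
  have "inner_inv1 A (W ** G)"
    using AGA AW unfolding inner_inv1_def by (simp add: matrix_mul_assoc)
  moreover have "W ** G ** A ** G = W ** G"
    using GAG by (simp flip: matrix_mul_assoc)
  ultimately have "oneGD_inv A (W ** G)"
    unfolding oneGD_inv_def using GD by metis
  moreover have "A ** (W ** G) = B ** (W ** G)"
    using AW BW by (simp add: matrix_mul_assoc)
  moreover have "W ** G ** A = W ** G ** B"
    using GB by (simp flip: matrix_mul_assoc)
  ultimately show ?thesis
    unfolding leq_1GD_def by blast
qed

theorem theorem3p14:
  fixes A B :: "complex^'n^'n"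
  assumes "ind A \<le> 1" and "ind B \<le> 1"
  shows "leq_1GD A B \<longleftrightarrow> left_sharp_leq A B"
  using leq_1GD_imp_left_sharp_leq left_sharp_leq_imp_leq_1GD assms(1) by blast

end
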